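(* Let $b_{10}>0$, $b_{11}\ge0$, $c_{01}\ge0$, $c_{11}\ge0$, and define $\gamma'=\frac{c_{01}}{b_{10}}$, $\delta'=\frac{b_{10}-b_{11}+c_{11}-c_{01}}{b_{10}}$. Let $\mathcal{F}=\{(P_{11},t): P_{11}\in[0,1],\ P_{11}-1\le t\le P_{11}\}$ and $\mathcal{P}=\{(P_{11},t)\in\mathcal{F}: t>\gamma'+\delta'P_{11}\}$. If $c_{11}\ge b_{11}-b_{10}$ (in particular, whenever $b_{11}\le b_{10}$), then $\mathcal{P}$ contains no pair $(P_{11},t)$ with $t<0$.
   Context: Double binary causal classification: $P_{11}$ is the probability of the positive outcome under the positive treatment, $t=P_{11}-P_{10}$ the estimated individual treatment effect, $b_{ij}$ the benefit of outcome $i$ under treatment $j$ and $c_{ij}$ the cost of outcome $i$ under treatment $j$, normalized so that $c_{00}=c_{10}=0$, $b_{00}=b_{01}=0$. The cost-sensitive causal decision boundary is $t=\gamma'+\delta'P_{11}$ and $\mathcal{P}$ is the positive treatment set. *)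

theory Defs
  imports Complex_Main
begin

definition gamma' :: "real \<Rightarrow> real \<Rightarrow> real" where
  "gamma' b10 c01 = c01 / b10"

definition delta' :: "real \<Rightarrow> real \<Rightarrow> real \<Rightarrow> real \<Rightarrow> real" where
  "delta' b10 b11 c01 c11 = (b10 - b11 + c11 - c01) / b10"

definition feasible_region :: "(real \<times> real) set" where
  "feasible_region = {(p, t). 0 \<le> p \<and> p \<le> 1 \<and> p - 1 \<le> t \<and> t \<le> p}"

definition pos_treatment_set :: "real \<Rightarrow> real \<Rightarrow> real \<Rightarrow> real \<Rightarrow> (real \<times> real) set" where
  "pos_treatment_set b10 b11 c01 c11 =
     {(p, t). (p, t) \<in> feasible_region \<and> t > gamma' b10 c01 + delta' b10 b11 c01 c11 * p}"

end

theory Submission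
  imports Defs
begin

(* On 0 \<le> P11 \<le> 1 the decision boundary is, up to the factor 1/b10, the convex combination
   (1 - P11) c01 + P11 (b10 - b11 + c11) of its values at the two ends, both of which are
   nonnegative under the hypotheses. So every pair in the positive treatment set has t > 0. *)

lemma decision_boundary_eq:
  assumes "b10 \<noteq> 0"
  shows "gamma' b10 c01 + delta' b10 b11 c01 c11 * p
           = (c01 * (1 - p) + (b10 - b11 + c11) * p) / b10"
  using assms by (simp add: gamma'_def delta'_def field_simps)

lemma decision_boundary_nonneg:
  assumes "b10 > 0" and "c01 \<ge> 0" and "c11 \<ge> b11 - b10"
    and "0 \<le> p" and "p \<le> 1"
  shows "gamma' b10 c01 + delta' b10 b11 c01 c11 * p \<ge> 0"
proof -
  have "c01 * (1 - p) + (b10 - b11 + c11) * p \<ge> 0"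
    using assms by simp
  then show ?thesis
    using assms(1) by (simp add: decision_boundary_eq)
qed

lemma pos_treatment_set_effect_pos:
  assumes "b10 > 0" and "c01 \<ge> 0" and "c11 \<ge> b11 - b10"
    and "(p, t) \<in> pos_treatment_set b10 b11 c01 c11"
  shows "t > 0"
proof -
  from assms(4) have p: "0 \<le> p" "p \<le> 1"
    and above: "t > gamma' b10 c01 + delta' b10 b11 c01 c11 * p"
    by (auto simp: pos_treatment_set_def feasible_region_def)
  show ?thesis
    using above decision_boundary_nonneg[OF assms(1-3) p] by linarith
qed

theorem corollary2:
  fixes b10 b11 c01 c11 :: real
  assumes "b10 > 0" and "b11 \<ge> 0" and "c01 \<ge> 0" and "c11 \<ge> 0"
    and "c11 \<ge> b11 - b10"
  shows "\<not> (\<exists>p t. (p, t) \<in> pos_treatment_set b10 b11 c01 c11 \<and> t < 0)"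
  using pos_treatment_set_effect_pos[OF assms(1,3,5)] by fastforce

end
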